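(* Let $p_1,\dots,p_n\ge0$ with $\sum_ip_i=1$, integers $d_i\ge1$ with $\sum_ip_id_i>1$. For $\lambda\in(0,1)$ let $\bar F_\lambda$ solve $\bar F'(w)=\lambda\sum_{i=1}^np_i\bar F(w)^{d_i}-\bar F(w)$, $\bar F(0)=\lambda$. Define $\mathbb E[W^{(i)}_\lambda]=\int_0^\infty\bar F_\lambda(w)^{d_i}dw$, $\mathbb E[W_\lambda]=\sum_ip_i\mathbb E[W^{(i)}_\lambda]$, $\mathbb E[R^{(i)}_\lambda]=1+\mathbb E[W^{(i)}_\lambda]$, $\mathbb E[R_\lambda]=1+\mathbb E[W_\lambda]$. Then for every $i$, $$\lim_{\lambda\to1^-}-\frac{\mathbb E[R^{(i)}_\lambda]}{\log(1-\lambda)}=\lim_{\lambda\to1^-}-\frac{\mathbb E[R_\lambda]}{\log(1-\lambda)}=\lim_{\lambda\to1^-}-\frac{\mathbb E[W^{(i)}_\lambda]}{\log(1-\lambda)}=\lim_{\lambda\to1^-}-\frac{\mathbb E[W_\lambda]}{\log(1-\lambda)}=\frac1{\sum_{i=1}^np_id_i-1}.$$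
   Context: This models the LL($d_1,\dots,d_n,p_1,\dots,p_n$) policy: with probability $p_i$ a job is sent to the least loaded of $d_i$ randomly sampled servers; job sizes exponential with mean 1. *)

theory Defs
  imports "HOL-Analysis.Analysis"
begin

text \<open>F l w stands for the tail function bar F_lambda(w) at lambda = l.
  p, d are indexed by j < n.\<close>

definition EWi :: "(real \<Rightarrow> real \<Rightarrow> real) \<Rightarrow> (nat \<Rightarrow> nat) \<Rightarrow> nat \<Rightarrow> real \<Rightarrow> real" where
  "EWi F d i l = integral {0..} (\<lambda>w. F l w ^ d i)"

definition EW :: "nat \<Rightarrow> (nat \<Rightarrow> real) \<Rightarrow> (nat \<Rightarrow> nat) \<Rightarrow> (real \<Rightarrow> real \<Rightarrow> real) \<Rightarrow> real \<Rightarrow> real" where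
  "EW n p d F l = (\<Sum>j<n. p j * EWi F d j l)"

definition ERi :: "(real \<Rightarrow> real \<Rightarrow> real) \<Rightarrow> (nat \<Rightarrow> nat) \<Rightarrow> nat \<Rightarrow> real \<Rightarrow> real" where
  "ERi F d i l = 1 + EWi F d i l"

definition ER :: "nat \<Rightarrow> (nat \<Rightarrow> real) \<Rightarrow> (nat \<Rightarrow> nat) \<Rightarrow> (real \<Rightarrow> real \<Rightarrow> real) \<Rightarrow> real \<Rightarrow> real" where
  "ER n p d F l = 1 + EW n p d F l"

end

theory Submission
  imports Defs "HOL-Real_Asymp.Real_Asymp"
begin

text \<open>
  Write \<open>\<Sum>\<^sub>j p\<^sub>j x ^ d\<^sub>j = x \<phi>(x)\<close>. The tail \<open>F\<close> then solves \<open>F' = - F (1 - \<lambda> \<phi>(F))\<close>,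
  so it stays in \<open>(0,1)\<close> and decays exponentially, and the substitution \<open>t = F(w)\<close> turns
  \<open>E[W\<^sub>i]\<close> into \<open>\<integral>\<^sub>0\<^sup>\<lambda> t ^ (d\<^sub>i - 1) / (1 - \<lambda> \<phi>(t)) dt\<close>. Now
  \<open>1 - \<lambda> \<phi>(t) = (1 - \<lambda>) + \<lambda> (1 - \<phi>(t))\<close>, and near \<open>t = 1\<close> the term \<open>1 - \<phi>(t)\<close> is squeezed
  between multiples of \<open>1 - t\<close> with slopes tending to \<open>\<phi>'(1) = m - 1\<close>, \<open>m = \<Sum>\<^sub>j p\<^sub>j d\<^sub>j\<close>.
  Comparing with \<open>\<integral> dt / ((1 - \<lambda>) + (m - 1)(1 - t))\<close> shows that the integral is
  \<open>- ln (1 - \<lambda>) / (m - 1)\<close> up to a factor tending to 1 and a bounded error. Averaging over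
  \<open>i\<close> and adding 1 leave the leading term unchanged.
\<close>

lemma one_minus_power_le:
  fixes t :: real
  assumes "0 \<le> t" "t \<le> 1"
  shows "1 - t ^ e \<le> real e * (1 - t)"
proof -
  have "1 + real e * (t - 1) \<le> (1 + (t - 1)) ^ e"
    by (rule Bernoulli_inequality) (use assms in auto)
  then show ?thesis by (simp add: algebra_simps)
qed

lemma one_minus_power_ge:
  fixes s t :: real
  assumes "0 \<le> s" "s \<le> t" "t \<le> 1"
  shows "real e * s ^ e * (1 - t) \<le> 1 - t ^ e"
proof (induction e)
  case 0
  then show ?case by simp
next
  case (Suc e)
  have "real (Suc e) * s ^ Suc e * (1 - t) = real e * s ^ Suc e * (1 - t) + s ^ Suc e * (1 - t)"
    by (simp add: algebra_simps)
  also have "\<dots> \<le> real e * s ^ e * (1 - t) + t ^ e * (1 - t)"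
    using assms power_decreasing[of e "Suc e" s] power_mono[of s t e]
    by (intro add_mono mult_right_mono mult_left_mono) auto
  also have "\<dots> \<le> 1 - t ^ Suc e"
    using Suc by (simp add: algebra_simps)
  finally show ?case .
qed

lemma has_integral_inverse_affine:
  fixes A C s l :: real
  assumes "0 < A" "0 < C" "s \<le> l" "l \<le> 1"
  shows "((\<lambda>t. 1 / (A + C * (1 - t))) has_integral
           (ln (A + C * (1 - s)) - ln (A + C * (1 - l))) / C) {s..l}"
proof -
  let ?G = "\<lambda>t. - ln (A + C * (1 - t)) / C"
  have "((\<lambda>t. 1 / (A + C * (1 - t))) has_integral (?G l - ?G s)) {s..l}"
  proof (rule fundamental_theorem_of_calculus[OF assms(3)])
    fix x assume x: "x \<in> {s..l}"
    have pos: "A + C * (1 - x) > 0"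
      using x assms by (simp add: add_pos_nonneg)
    have "(?G has_real_derivative (1 / (A + C * (1 - x)))) (at x)"
      using pos assms(2) by (auto intro!: derivative_eq_intros simp: divide_simps)
    then show "(?G has_vector_derivative (1 / (A + C * (1 - x)))) (at x within {s..l})"
      by (simp add: has_real_derivative_iff_has_vector_derivative has_vector_derivative_at_within)
  qed
  then show ?thesis by (simp add: diff_divide_distrib)
qed

lemma ode_exp_sandwich:
  fixes f g :: "real \<Rightarrow> real" and c C W :: real
  assumes der: "\<And>w. 0 < w \<Longrightarrow> (f has_real_derivative - (f w * g (f w))) (at w)"
    and cont: "continuous_on {0..} f"
    and g_bounds: "\<And>x. 0 < x \<Longrightarrow> x < 1 \<Longrightarrow> c \<le> g x \<and> g x \<le> C"
    and W: "0 \<le> W"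
    and inside: "\<And>v. 0 \<le> v \<Longrightarrow> v < W \<Longrightarrow> 0 < f v \<and> f v < 1"
  shows "f 0 * exp (- C * W) \<le> f W \<and> f W \<le> f 0 * exp (- c * W)"
proof -
  have weighted_der: "((\<lambda>v. f v * exp (a * v)) has_real_derivative
      f x * exp (a * x) * (a - g (f x))) (at x)" if "0 < x" for a x
    using der[OF that] by (auto intro!: derivative_eq_intros simp: algebra_simps)
  have cont_W: "continuous_on {0..W} (\<lambda>v. f v * exp (a * v))" for a
    using cont by (auto intro!: continuous_intros intro: continuous_on_subset)
  have "f 0 \<le> f W * exp (C * W)"
  proof -
    have "f 0 * exp (C * 0) \<le> f W * exp (C * W)"
    proof (rule DERIV_nonneg_imp_increasing_open[OF W _ cont_W])
      fix x assume x: "0 < x" "x < W"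
      then have "0 < f x" "f x < 1" using inside by auto
      then have "0 \<le> f x * exp (C * x) * (C - g (f x))"
        using g_bounds by simp
      then show "\<exists>y. ((\<lambda>v. f v * exp (C * v)) has_real_derivative y) (at x) \<and> 0 \<le> y"
        using weighted_der x by blast
    qed
    then show ?thesis by simp
  qed
  moreover have "f W * exp (c * W) \<le> f 0"
  proof -
    have "f W * exp (c * W) \<le> f 0 * exp (c * 0)"
    proof (rule DERIV_nonpos_imp_decreasing_open[OF W _ cont_W])
      fix x assume x: "0 < x" "x < W"
      then have "0 < f x" "f x < 1" using inside by auto
      then have "f x * exp (c * x) * (c - g (f x)) \<le> 0"
        using g_bounds by (simp add: mult_nonneg_nonpos)
      then show "\<exists>y. ((\<lambda>v. f v * exp (c * v)) has_real_derivative y) (at x) \<and> y \<le> 0"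
        using weighted_der x by blast
    qed
    then show ?thesis by simp
  qed
  ultimately show ?thesis
    by (simp add: exp_minus field_simps)
qed

lemma ode_solution_in_unit_interval:
  fixes f g :: "real \<Rightarrow> real" and c C w :: real
  assumes der: "\<And>w. 0 < w \<Longrightarrow> (f has_real_derivative - (f w * g (f w))) (at w)"
    and cont: "continuous_on {0..} f"
    and g_bounds: "\<And>x. 0 < x \<Longrightarrow> x < 1 \<Longrightarrow> c \<le> g x \<and> g x \<le> C"
    and c: "0 \<le> c"
    and f0: "0 < f 0" "f 0 < 1"
    and w: "0 \<le> w"
  shows "0 < f w \<and> f w < 1"
proof (rule ccontr)
  assume not_inside: "\<not> (0 < f w \<and> f w < 1)"
  define T where "T = {0..} \<inter> f -` ({..0} \<union> {1..})"
  have "closed T"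
    unfolding T_def by (intro continuous_closed_preimage cont) auto
  moreover have "w \<in> T"
    using w not_inside unfolding T_def by auto
  moreover have bdd: "bdd_below T"
    unfolding T_def by (rule bdd_belowI[of _ 0]) auto
  ultimately have first_exit: "Inf T \<in> T"
    \<comment> \<open>the first time \<open>f\<close> leaves \<open>(0,1)\<close>; up to then the exponential sandwich keeps it inside\<close>
    by (intro closed_contains_Inf) auto
  then have "0 \<le> Inf T"
    unfolding T_def by auto
  moreover have "0 < f v \<and> f v < 1" if "0 \<le> v" "v < Inf T" for v
    using that cInf_lower[OF _ bdd, of v] unfolding T_def by force
  ultimately have "f 0 * exp (- C * Inf T) \<le> f (Inf T) \<and> f (Inf T) \<le> f 0 * exp (- c * Inf T)"
    by (intro ode_exp_sandwich[OF der cont g_bounds]) auto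
  moreover have "0 < f 0 * exp (- C * Inf T)"
    using f0 by simp
  moreover have "f 0 * exp (- c * Inf T) \<le> f 0"
    using f0 c \<open>0 \<le> Inf T\<close> by (simp add: mult_nonneg_nonneg)
  ultimately have "0 < f (Inf T) \<and> f (Inf T) < 1"
    using f0 by linarith
  then show False
    using first_exit unfolding T_def by auto
qed

lemma has_integral_ode_solution_substitution:
  fixes f h q g :: "real \<Rightarrow> real"
  assumes f_der: "\<And>w. 0 \<le> w \<Longrightarrow> (f has_real_derivative - h (f w)) (at w within {0..})"
    and f_range: "\<And>w. 0 \<le> w \<Longrightarrow> 0 < f w \<and> f w < 1"
    and f_lim: "(f \<longlongrightarrow> 0) at_top"
    and q_cont: "continuous_on {0..1} q"
    and g_eq: "\<And>x. 0 < x \<Longrightarrow> x < 1 \<Longrightarrow> g x = q x * h x"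
    and g_nonneg: "\<And>x. 0 < x \<Longrightarrow> x < 1 \<Longrightarrow> 0 \<le> g x"
  shows "((\<lambda>w. g (f w)) has_integral integral {0..f 0} q) {0..}"
proof -
  define P where "P x = integral {0..x} q" for x
  have P_cont: "continuous_on {0..1} P"
    unfolding P_def
    by (rule indefinite_integral_continuous_1, rule integrable_continuous_interval[OF q_cont])
  have P_der: "(P has_real_derivative q y) (at y)" if "0 < y" "y < 1" for y
  proof -
    have "(P has_vector_derivative q y) (at y within {0..1})"
      unfolding P_def by (rule integral_has_vector_derivative[OF q_cont]) (use that in auto)
    moreover have "at y within {0..1} = at y"
      using that by (intro at_within_interior) auto
    ultimately show ?thesis
      by (simp add: has_real_derivative_iff_has_vector_derivative)
  qed
  have antiderivative: "((\<lambda>w. - P (f w)) has_real_derivative g (f w)) (at w within {0..})"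
    if "0 \<le> w" for w
    using DERIV_chain2[OF P_der f_der[OF that]] f_range[OF that] g_eq
    by (auto intro!: derivative_eq_intros)
  have partial: "((\<lambda>w. g (f w)) has_integral P (f 0) - P (f y)) {0..y}" if "0 \<le> y" for y
  proof -
    have "((\<lambda>w. g (f w)) has_integral (- P (f y)) - (- P (f 0))) {0..y}"
    proof (rule fundamental_theorem_of_calculus[OF that])
      fix x assume "x \<in> {0..y}"
      then have "((\<lambda>w. - P (f w)) has_real_derivative g (f x)) (at x within {0..y})"
        by (intro has_field_derivative_subset[OF antiderivative]) auto
      then show "((\<lambda>w. - P (f w)) has_vector_derivative g (f x)) (at x within {0..y})"
        by (simp add: has_real_derivative_iff_has_vector_derivative)
    qed
    then show ?thesis by simp
  qed
  have "((\<lambda>y. P (f y)) \<longlongrightarrow> P 0) at_top"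
    using f_range by (intro continuous_on_tendsto_compose[OF P_cont f_lim])
      (auto intro: eventually_at_top_linorderI[of 0] less_imp_le)
  then have "((\<lambda>y. P (f 0) - P (f y)) \<longlongrightarrow> P (f 0)) at_top"
    by (auto intro!: tendsto_eq_intros simp: P_def)
  moreover have "eventually (\<lambda>y. integral {0..y} (\<lambda>w. g (f w)) = P (f 0) - P (f y)) at_top"
    using partial by (intro eventually_at_top_linorderI[of 0]) (auto intro: integral_unique)
  ultimately have "((\<lambda>y. integral {0..y} (\<lambda>w. g (f w))) \<longlongrightarrow> P (f 0)) at_top"
    using tendsto_cong by fastforce
  then show ?thesis
    unfolding P_def[of "f 0"]
  proof (rule has_integral_to_inf[rotated])
    show "(\<lambda>w. g (f w)) integrable_on {0..y}" for y
      using partial[of y] by (cases "0 \<le> y") (auto intro: has_integral_integrable)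
    show "0 \<le> g (f y)" if "0 \<le> y" for y
      using f_range[OF that] g_nonneg by auto
  qed
qed

lemma eventually_neg_ln_one_minus_pos:
  "eventually (\<lambda>l::real. 0 < l \<and> l < 1 \<and> 0 < - ln (1 - l)) (at_left 1)"
proof -
  have "eventually (\<lambda>l::real. l \<in> {0<..<1}) (at_left 1)"
    by (rule eventually_at_left_real) simp
  then show ?thesis
    by eventually_elim (auto simp: ln_less_zero)
qed

lemma tendsto_div_neg_ln_one_minus: "((\<lambda>l::real. K / - ln (1 - l)) \<longlongrightarrow> 0) (at_left 1)"
  by real_asymp

lemma eventually_gt_div_neg_ln_one_minus:
  fixes u :: "real \<Rightarrow> real"
  assumes "eventually (\<lambda>l. A * - ln (1 - l) + B \<le> u l) (at_left 1)" and "a < A"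
  shows "eventually (\<lambda>l. a < u l / - ln (1 - l)) (at_left 1)"
proof -
  have "((\<lambda>l. A + B / - ln (1 - l)) \<longlongrightarrow> A + 0) (at_left 1)"
    by (intro tendsto_intros tendsto_div_neg_ln_one_minus)
  then have "eventually (\<lambda>l. a < A + B / - ln (1 - l)) (at_left 1)"
    using \<open>a < A\<close> by (intro order_tendstoD) auto
  with assms(1) eventually_neg_ln_one_minus_pos show ?thesis
  proof eventually_elim
    case (elim l)
    then have "A + B / - ln (1 - l) = (A * - ln (1 - l) + B) / - ln (1 - l)"
      by (simp add: field_simps)
    also have "\<dots> \<le> u l / - ln (1 - l)"
      using elim by (intro divide_right_mono) auto
    finally show ?case
      using elim by linarith
  qed
qed

lemma eventually_lt_div_neg_ln_one_minus:
  fixes u :: "real \<Rightarrow> real"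
  assumes "eventually (\<lambda>l. u l \<le> A * - ln (1 - l) + B) (at_left 1)" and "A < a"
  shows "eventually (\<lambda>l. u l / - ln (1 - l) < a) (at_left 1)"
proof -
  have "eventually (\<lambda>l. - A * - ln (1 - l) + - B \<le> - u l) (at_left 1)"
    using assms(1) by eventually_elim simp
  then have "eventually (\<lambda>l. - a < - u l / - ln (1 - l)) (at_left 1)"
    by (rule eventually_gt_div_neg_ln_one_minus[where u = "\<lambda>l. - u l" and A = "- A" and B = "- B"])
      (use assms(2) in simp)
  then show ?thesis
    by eventually_elim simp
qed

lemma tendsto_one_plus_div_neg_ln_one_minus:
  fixes X :: "real \<Rightarrow> real"
  assumes "((\<lambda>l. X l / - ln (1 - l)) \<longlongrightarrow> c) (at_left 1)"
  shows "((\<lambda>l. (1 + X l) / - ln (1 - l)) \<longlongrightarrow> c) (at_left 1)"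
  using tendsto_add[OF tendsto_div_neg_ln_one_minus[of 1] assms] by (simp add: add_divide_distrib)

locale ll_policy =
  fixes n :: nat and p :: "nat \<Rightarrow> real" and d :: "nat \<Rightarrow> nat"
  assumes p_nonneg: "\<forall>j<n. p j \<ge> 0"
    and p_sum: "(\<Sum>j<n. p j) = 1"
    and d_pos: "\<forall>j<n. d j \<ge> 1"
    and drift: "(\<Sum>j<n. p j * real (d j)) > 1"
begin

definition phi :: "real \<Rightarrow> real" where
  "phi t = (\<Sum>j<n. p j * t ^ (d j - 1))"

definition d_mean :: real where
  "d_mean = (\<Sum>j<n. p j * real (d j))"

definition phi_slope :: "real \<Rightarrow> real" where
  "phi_slope s = (\<Sum>j<n. p j * real (d j - 1) * s ^ (d j - 1))"

lemma sum_p_power_eq: "(\<Sum>j<n. p j * x ^ d j) = x * phi x"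
proof -
  have "(\<Sum>j<n. p j * x ^ d j) = (\<Sum>j<n. x * (p j * x ^ (d j - 1)))"
    using d_pos by (intro sum.cong refl) (auto simp: power_eq_if)
  then show ?thesis
    unfolding phi_def by (simp add: sum_distrib_left)
qed

lemma d_mean_minus_one: "d_mean - 1 = (\<Sum>j<n. p j * real (d j - 1))"
proof -
  have "(\<Sum>j<n. p j * real (d j - 1)) = (\<Sum>j<n. p j * real (d j) - p j)"
    using d_pos by (intro sum.cong) (auto simp: of_nat_diff algebra_simps)
  then show ?thesis
    using p_sum by (simp add: d_mean_def sum_subtractf)
qed

lemma d_mean_gt_one: "d_mean > 1"
  using drift by (simp add: d_mean_def)

lemma phi_nonneg: "0 \<le> t \<Longrightarrow> 0 \<le> phi t"
  unfolding phi_def using p_nonneg by (intro sum_nonneg) auto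

lemma phi_mono: "0 \<le> t \<Longrightarrow> t \<le> t' \<Longrightarrow> phi t \<le> phi t'"
  unfolding phi_def using p_nonneg by (intro sum_mono mult_left_mono power_mono) auto

lemma phi_le_one: "0 \<le> t \<Longrightarrow> t \<le> 1 \<Longrightarrow> phi t \<le> 1"
  using phi_mono[of t 1] p_sum by (simp add: phi_def)

lemma one_minus_phi: "1 - phi t = (\<Sum>j<n. p j * (1 - t ^ (d j - 1)))"
  unfolding phi_def using p_sum by (simp add: algebra_simps sum_subtractf sum_distrib_left)

lemma one_minus_phi_le: "0 \<le> t \<Longrightarrow> t \<le> 1 \<Longrightarrow> 1 - phi t \<le> (d_mean - 1) * (1 - t)"
  unfolding one_minus_phi d_mean_minus_one sum_distrib_right
  using p_nonneg one_minus_power_le[of t]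
  by (intro sum_mono) (auto simp: mult.assoc intro: mult_left_mono)

lemma one_minus_phi_ge:
  "0 \<le> s \<Longrightarrow> s \<le> t \<Longrightarrow> t \<le> 1 \<Longrightarrow> phi_slope s * (1 - t) \<le> 1 - phi t"
  unfolding one_minus_phi phi_slope_def sum_distrib_right
  using p_nonneg one_minus_power_ge[of s t]
  by (intro sum_mono) (auto simp: mult.assoc intro: mult_left_mono)

lemma phi_slope_nonneg: "0 \<le> s \<Longrightarrow> 0 \<le> phi_slope s"
  unfolding phi_slope_def using p_nonneg by (intro sum_nonneg) auto

lemma phi_slope_tendsto: "(phi_slope \<longlongrightarrow> d_mean - 1) (at_left 1)"
proof -
  have "isCont phi_slope 1"
    unfolding phi_slope_def by (intro continuous_intros)
  then have "(phi_slope \<longlongrightarrow> d_mean - 1) (at 1)"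
    using isContD by (force simp: phi_slope_def d_mean_minus_one)
  then show ?thesis
    by (rule tendsto_mono[OF at_le, rotated]) simp
qed

text \<open>\<open>W_integral (d i) \<lambda>\<close> is \<open>E[W\<^sub>i]\<close> after the substitution \<open>t = F(w)\<close> (\<open>ode_solution_integral\<close>).\<close>

definition w_kernel :: "nat \<Rightarrow> real \<Rightarrow> real \<Rightarrow> real" where
  "w_kernel D l t = t ^ (D - 1) / (1 - l * phi t)"

definition W_integral :: "nat \<Rightarrow> real \<Rightarrow> real" where
  "W_integral D l = integral {0..l} (w_kernel D l)"

lemma kernel_denominator_pos: "0 \<le> t \<Longrightarrow> t \<le> 1 \<Longrightarrow> 0 \<le> l \<Longrightarrow> l < 1 \<Longrightarrow> 0 < 1 - l * phi t"
  using mult_left_mono[of "phi t" 1 l] phi_le_one[of t] by simp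

lemma kernel_denominator_le:
  assumes "0 \<le> t" "t \<le> 1" "0 \<le> l" "l \<le> 1"
  shows "1 - l * phi t \<le> (1 - l) + (d_mean - 1) * (1 - t)"
proof -
  have "1 - l * phi t = (1 - l) + l * (1 - phi t)"
    by (simp add: algebra_simps)
  also have "\<dots> \<le> (1 - l) + (1 - phi t)"
    using phi_le_one[of t] assms by (intro add_left_mono mult_left_le_one_le) auto
  finally show ?thesis
    using one_minus_phi_le[of t] assms by simp
qed

lemma kernel_denominator_ge:
  assumes "0 \<le> s" "s \<le> t" "t \<le> 1" "s \<le> l" "l \<le> 1"
  shows "s * ((1 - l) + phi_slope s * (1 - t)) \<le> 1 - l * phi t"
proof -
  have "s * ((1 - l) + phi_slope s * (1 - t)) = s * (1 - l) + s * (phi_slope s * (1 - t))"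
    by (simp add: algebra_simps)
  also have "\<dots> \<le> (1 - l) + l * (1 - phi t)"
    using assms one_minus_phi_ge[of s t] phi_slope_nonneg[of s]
    by (intro add_mono mult_mono mult_left_le_one_le) auto
  also have "\<dots> = 1 - l * phi t"
    by (simp add: algebra_simps)
  finally show ?thesis .
qed

lemma w_kernel_continuous_on:
  assumes "0 \<le> l" "l < 1"
  shows "continuous_on {0..1} (w_kernel D l)"
proof -
  have "continuous_on {0..1} phi"
    unfolding phi_def by (intro continuous_intros)
  moreover have "1 - l * phi t \<noteq> 0" if "t \<in> {0..1}" for t
    using kernel_denominator_pos[of t l] that assms by simp
  ultimately show ?thesis
    unfolding w_kernel_def by (intro continuous_intros) auto
qed

lemma w_kernel_integrable:
  "0 \<le> l \<Longrightarrow> l < 1 \<Longrightarrow> 0 \<le> a \<Longrightarrow> b \<le> 1 \<Longrightarrow> w_kernel D l integrable_on {a..b}"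
  by (rule integrable_continuous_interval, rule continuous_on_subset[OF w_kernel_continuous_on]) auto

lemma W_integral_split:
  "0 \<le> s \<Longrightarrow> s \<le> l \<Longrightarrow> l < 1 \<Longrightarrow>
     W_integral D l = integral {0..s} (w_kernel D l) + integral {s..l} (w_kernel D l)"
  unfolding W_integral_def
  using Henstock_Kurzweil_Integration.integral_combine[where a = 0 and c = s and b = l and f = "w_kernel D l"]
    w_kernel_integrable[of l 0 l D]
  by simp

lemma W_integral_lower:
  assumes s: "0 < s" "s < l" "l < 1"
  shows "s ^ (D - 1) / (d_mean - 1) * - ln (1 - l)
           + s ^ (D - 1) * (ln ((d_mean - 1) * (1 - s)) - ln d_mean) / (d_mean - 1)
         \<le> W_integral D l"
proof -
  define C where "C = d_mean - 1"
  have C: "0 < C"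
    using d_mean_gt_one by (simp add: C_def)
  have head: "0 \<le> integral {0..s} (w_kernel D l)"
    using s kernel_denominator_pos[of _ l]
    by (intro integral_nonneg w_kernel_integrable) (auto simp: w_kernel_def intro!: divide_nonneg_pos)
  have "((\<lambda>t. s ^ (D - 1) * (1 / ((1 - l) + C * (1 - t)))) has_integral
          s ^ (D - 1) * ((ln ((1 - l) + C * (1 - s)) - ln ((1 - l) + C * (1 - l))) / C)) {s..l}"
    using s C by (intro has_integral_mult_right has_integral_inverse_affine) auto
  then have tail: "s ^ (D - 1) * ((ln ((1 - l) + C * (1 - s)) - ln ((1 - l) + C * (1 - l))) / C)
                     \<le> integral {s..l} (w_kernel D l)"
  proof (rule has_integral_le)
    show "(w_kernel D l has_integral integral {s..l} (w_kernel D l)) {s..l}"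
      using s w_kernel_integrable[of l s l D] by auto
    fix t assume t: "t \<in> {s..l}"
    then have "s ^ (D - 1) / ((1 - l) + C * (1 - t)) \<le> t ^ (D - 1) / (1 - l * phi t)"
      using s kernel_denominator_pos[of t l] kernel_denominator_le[of t l]
      by (intro frac_le) (auto simp: C_def intro: power_mono)
    then show "s ^ (D - 1) * (1 / ((1 - l) + C * (1 - t))) \<le> w_kernel D l t"
      by (simp add: w_kernel_def)
  qed
  have "ln ((1 - l) + C * (1 - l)) = ln d_mean + ln (1 - l)"
  proof -
    have "(1 - l) + C * (1 - l) = d_mean * (1 - l)"
      by (simp add: C_def algebra_simps)
    then show ?thesis
      using s d_mean_gt_one by (simp add: ln_mult)
  qed
  moreover have "ln (C * (1 - s)) \<le> ln ((1 - l) + C * (1 - s))"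
    using s C mult_pos_pos[of C "1 - s"] by (subst ln_le_cancel_iff) linarith+
  ultimately have "s ^ (D - 1) * ((ln (C * (1 - s)) - ln d_mean - ln (1 - l)) / C)
      \<le> s ^ (D - 1) * ((ln ((1 - l) + C * (1 - s)) - ln ((1 - l) + C * (1 - l))) / C)"
    using s C by (intro mult_left_mono divide_right_mono) auto
  moreover have "s ^ (D - 1) / C * - ln (1 - l) + s ^ (D - 1) * (ln (C * (1 - s)) - ln d_mean) / C
      = s ^ (D - 1) * ((ln (C * (1 - s)) - ln d_mean - ln (1 - l)) / C)"
    using C by (simp add: field_simps)
  ultimately show ?thesis
    using W_integral_split[of s l D] s head tail unfolding C_def[symmetric] by linarith
qed

lemma W_integral_upper:
  assumes s: "0 < s" "s < l" "l < 1" and slope: "0 < phi_slope s"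
  shows "W_integral D l
         \<le> 1 / (s * phi_slope s) * - ln (1 - l) + (s / (1 - phi s) + ln (1 + phi_slope s) / (s * phi_slope s))"
proof -
  define c where "c = phi_slope s"
  have c: "0 < c"
    using slope by (simp add: c_def)
  have phi_s: "0 < 1 - phi s"
    using one_minus_phi_ge[of s s] s mult_pos_pos[OF slope, of "1 - s"] by linarith
  have head: "integral {0..s} (w_kernel D l) \<le> s / (1 - phi s)"
  proof -
    have "integral {0..s} (w_kernel D l) \<le> integral {0..s} (\<lambda>t. 1 / (1 - phi s))"
    proof (rule integral_le)
      show "w_kernel D l integrable_on {0..s}"
        using s by (intro w_kernel_integrable) auto
      fix t assume t: "t \<in> {0..s}"
      have "1 - phi s \<le> 1 - l * phi t"
        using t s phi_mono[of t s] phi_nonneg[of t] mult_left_le_one_le[of "phi t" l] by auto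
      then show "w_kernel D l t \<le> 1 / (1 - phi s)"
        unfolding w_kernel_def using t s phi_s by (intro frac_le) (auto intro: power_le_one)
    qed (rule integrable_const_ivl)
    then show ?thesis
      using s by simp
  qed
  have "((\<lambda>t. 1 / s * (1 / ((1 - l) + c * (1 - t)))) has_integral
          1 / s * ((ln ((1 - l) + c * (1 - s)) - ln ((1 - l) + c * (1 - l))) / c)) {s..l}"
    using s c by (intro has_integral_mult_right has_integral_inverse_affine) auto
  then have tail: "integral {s..l} (w_kernel D l)
                     \<le> 1 / s * ((ln ((1 - l) + c * (1 - s)) - ln ((1 - l) + c * (1 - l))) / c)"
  proof (rule has_integral_le[rotated])
    show "(w_kernel D l has_integral integral {s..l} (w_kernel D l)) {s..l}"
      using s w_kernel_integrable[of l s l D] by auto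
    fix t assume t: "t \<in> {s..l}"
    then have "t ^ (D - 1) / (1 - l * phi t) \<le> 1 / (s * ((1 - l) + c * (1 - t)))"
      using s c kernel_denominator_ge[of s t l]
      by (intro frac_le) (auto simp: c_def intro!: power_le_one mult_pos_pos add_pos_nonneg)
    then show "w_kernel D l t \<le> 1 / s * (1 / ((1 - l) + c * (1 - t)))"
      by (simp add: w_kernel_def)
  qed
  have "0 < c * (1 - s)" "c * (1 - s) \<le> c * 1"
    using s c by (auto intro: mult_left_mono)
  then have "ln ((1 - l) + c * (1 - s)) \<le> ln (1 + c)"
    using s c by (subst ln_le_cancel_iff) linarith+
  moreover have "ln (1 - l) \<le> ln ((1 - l) + c * (1 - l))"
    using s c mult_pos_pos[of c "1 - l"] by (subst ln_le_cancel_iff) linarith+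
  ultimately have "1 / s * ((ln ((1 - l) + c * (1 - s)) - ln ((1 - l) + c * (1 - l))) / c)
      \<le> 1 / s * ((ln (1 + c) - ln (1 - l)) / c)"
    using s c by (intro mult_left_mono divide_right_mono) auto
  moreover have "1 / s * ((ln (1 + c) - ln (1 - l)) / c)
      = 1 / (s * c) * - ln (1 - l) + ln (1 + c) / (s * c)"
    using s c by (simp add: field_simps)
  ultimately show ?thesis
    using W_integral_split[of s l D] s head tail unfolding c_def[symmetric] by linarith
qed

lemma W_integral_tendsto:
  "((\<lambda>l. W_integral D l / - ln (1 - l)) \<longlongrightarrow> 1 / (d_mean - 1)) (at_left 1)"
proof (rule order_tendstoI)
  have C: "0 < d_mean - 1"
    using d_mean_gt_one by simp
  fix a assume a: "a < 1 / (d_mean - 1)"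
  have "((\<lambda>s. s ^ (D - 1) / (d_mean - 1)) \<longlongrightarrow> 1 / (d_mean - 1)) (at_left 1)"
    using C by (auto intro!: tendsto_eq_intros)
  then have "eventually (\<lambda>s. a < s ^ (D - 1) / (d_mean - 1) \<and> s \<in> {0<..<1}) (at_left 1)"
    using a eventually_at_left_real[of 0 1] by (auto intro: order_tendstoD eventually_conj)
  then obtain s where s: "a < s ^ (D - 1) / (d_mean - 1)" "0 < s" "s < 1"
    using eventually_happens'[OF trivial_limit_at_left_real] by auto
  have "eventually (\<lambda>l. s ^ (D - 1) / (d_mean - 1) * - ln (1 - l)
      + s ^ (D - 1) * (ln ((d_mean - 1) * (1 - s)) - ln d_mean) / (d_mean - 1) \<le> W_integral D l)
      (at_left 1)"
    using eventually_at_left_real[OF s(3)]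
    by eventually_elim (intro W_integral_lower[OF s(2)]; simp)
  then show "eventually (\<lambda>l. a < W_integral D l / - ln (1 - l)) (at_left 1)"
    using s(1) by (rule eventually_gt_div_neg_ln_one_minus)
next
  have C: "0 < d_mean - 1"
    using d_mean_gt_one by simp
  fix a assume a: "1 / (d_mean - 1) < a"
  have "((\<lambda>s. 1 / (s * phi_slope s)) \<longlongrightarrow> 1 / (1 * (d_mean - 1))) (at_left 1)"
    using C by (intro tendsto_intros phi_slope_tendsto) auto
  then have "eventually (\<lambda>s. 1 / (s * phi_slope s) < a) (at_left 1)"
    using a by (auto intro: order_tendstoD)
  moreover have "eventually (\<lambda>s. 0 < phi_slope s) (at_left 1)"
    using C by (rule order_tendstoD(1)[OF phi_slope_tendsto])
  ultimately have "eventually (\<lambda>s. 1 / (s * phi_slope s) < a \<and> 0 < phi_slope s \<and> s \<in> {0<..<1})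
      (at_left 1)"
    using eventually_at_left_real[of 0 1] by (auto intro: eventually_conj)
  then obtain s where s: "1 / (s * phi_slope s) < a" "0 < phi_slope s" "0 < s" "s < 1"
    using eventually_happens'[OF trivial_limit_at_left_real] by auto
  have "eventually (\<lambda>l. W_integral D l \<le> 1 / (s * phi_slope s) * - ln (1 - l)
      + (s / (1 - phi s) + ln (1 + phi_slope s) / (s * phi_slope s))) (at_left 1)"
    using eventually_at_left_real[OF s(4)]
    by eventually_elim (intro W_integral_upper[OF s(3)] s(2); simp)
  then show "eventually (\<lambda>l. W_integral D l / - ln (1 - l) < a) (at_left 1)"
    using s(1) by (rule eventually_lt_div_neg_ln_one_minus)
qed

lemma ode_solution_integral:
  fixes f :: "real \<Rightarrow> real"
  assumes l: "0 < l" "l < 1"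
    and ode: "\<And>w. 0 \<le> w \<Longrightarrow>
      (f has_real_derivative (l * (\<Sum>j<n. p j * f w ^ d j) - f w)) (at w within {0..})"
    and init: "f 0 = l"
    and D: "1 \<le> D"
  shows "integral {0..} (\<lambda>w. f w ^ D) = W_integral D l"
proof -
  define rate where "rate x = 1 - l * phi x" for x
  have der_within: "(f has_real_derivative - (f w * rate (f w))) (at w within {0..})" if "0 \<le> w" for w
    using ode[OF that] by (simp add: sum_p_power_eq rate_def algebra_simps)
  have der: "(f has_real_derivative - (f w * rate (f w))) (at w)" if "0 < w" for w
    using der_within[of w] that at_within_interior[of w "{0..}"] by simp
  have cont: "continuous_on {0..} f"
    using der_within by (auto simp: continuous_on_eq_continuous_within intro: DERIV_continuous)
  have rate_bounds: "1 - l \<le> rate x \<and> rate x \<le> 1" if "0 < x" "x < 1" for x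
    using that l phi_nonneg[of x] phi_le_one[of x] mult_left_le_one_le[of "phi x" l]
    by (auto simp: rate_def)
  have range: "0 < f w \<and> f w < 1" if "0 \<le> w" for w
    using ode_solution_in_unit_interval[OF der cont rate_bounds] l init that by auto
  have f_lim: "(f \<longlongrightarrow> 0) at_top"
  proof (rule tendsto_sandwich[of "\<lambda>_. 0" _ _ "\<lambda>w. l * exp (- (1 - l) * w)"])
    show "eventually (\<lambda>w. 0 \<le> f w) at_top"
      using range by (intro eventually_at_top_linorderI[of 0]) (auto intro: less_imp_le)
    show "eventually (\<lambda>w. f w \<le> l * exp (- (1 - l) * w)) at_top"
      using ode_exp_sandwich[OF der cont rate_bounds] range init
      by (intro eventually_at_top_linorderI[of 0]) auto
    show "((\<lambda>w. l * exp (- (1 - l) * w)) \<longlongrightarrow> 0) at_top"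
      using l by real_asymp
  qed simp
  have kernel_identity: "x ^ D = w_kernel D l x * (x * rate x)" if "0 < x" "x < 1" for x
  proof -
    have "x ^ D = x ^ (D - 1) * x"
      using D by (simp add: power_eq_if)
    then show ?thesis
      using that l kernel_denominator_pos[of x l] by (simp add: w_kernel_def rate_def)
  qed
  have "((\<lambda>w. f w ^ D) has_integral integral {0..f 0} (w_kernel D l)) {0..}"
    using l
    by (intro has_integral_ode_solution_substitution[where h = "\<lambda>x. x * rate x"]
        der_within range f_lim w_kernel_continuous_on kernel_identity) auto
  then show ?thesis
    unfolding W_integral_def init by (simp add: integral_unique)
qed

end

theorem theorem4p3:
  fixes n :: nat and p :: "nat \<Rightarrow> real" and d :: "nat \<Rightarrow> nat"
    and F :: "real \<Rightarrow> real \<Rightarrow> real" and i :: nat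
  assumes p_nonneg: "\<forall>j<n. p j \<ge> 0"
    and p_sum: "(\<Sum>j<n. p j) = 1"
    and d_pos: "\<forall>j<n. d j \<ge> 1"
    and drift: "(\<Sum>j<n. p j * real (d j)) > 1"
    and ode: "\<forall>l\<in>{0<..<1}. \<forall>w\<ge>0.
       (F l has_real_derivative (l * (\<Sum>j<n. p j * F l w ^ d j) - F l w)) (at w within {0..})"
    and init: "\<forall>l\<in>{0<..<1}. F l 0 = l"
    and i: "i < n"
  shows "((\<lambda>l. - ERi F d i l / ln (1 - l)) \<longlongrightarrow> 1 / ((\<Sum>j<n. p j * real (d j)) - 1)) (at_left 1)
       \<and> ((\<lambda>l. - ER n p d F l / ln (1 - l)) \<longlongrightarrow> 1 / ((\<Sum>j<n. p j * real (d j)) - 1)) (at_left 1)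
       \<and> ((\<lambda>l. - EWi F d i l / ln (1 - l)) \<longlongrightarrow> 1 / ((\<Sum>j<n. p j * real (d j)) - 1)) (at_left 1)
       \<and> ((\<lambda>l. - EW n p d F l / ln (1 - l)) \<longlongrightarrow> 1 / ((\<Sum>j<n. p j * real (d j)) - 1)) (at_left 1)"
proof -
  interpret ll_policy n p d
    using p_nonneg p_sum d_pos drift by unfold_locales
  have EWi_tendsto: "((\<lambda>l. EWi F d j l / - ln (1 - l)) \<longlongrightarrow> 1 / (d_mean - 1)) (at_left 1)"
    if "j < n" for j
  proof (rule Lim_transform_eventually[OF W_integral_tendsto])
    show "eventually (\<lambda>l. W_integral (d j) l / - ln (1 - l) = EWi F d j l / - ln (1 - l)) (at_left 1)"
      using eventually_neg_ln_one_minus_pos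
      by eventually_elim (use ode init d_pos that in \<open>auto simp: EWi_def ode_solution_integral\<close>)
  qed
  have "((\<lambda>l. \<Sum>j<n. p j * (EWi F d j l / - ln (1 - l))) \<longlongrightarrow> (\<Sum>j<n. p j * (1 / (d_mean - 1))))
      (at_left 1)"
    by (intro tendsto_sum tendsto_mult tendsto_const EWi_tendsto) auto
  moreover have "(\<Sum>j<n. p j * (1 / (d_mean - 1))) = 1 / (d_mean - 1)"
    using p_sum by (simp add: sum_divide_distrib[symmetric])
  moreover have "(\<Sum>j<n. p j * (EWi F d j l / - ln (1 - l))) = EW n p d F l / - ln (1 - l)" for l
    by (simp add: EW_def sum_divide_distrib sum_negf)
  ultimately have EW_tendsto: "((\<lambda>l. EW n p d F l / - ln (1 - l)) \<longlongrightarrow> 1 / (d_mean - 1)) (at_left 1)"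
    by simp
  have neg: "- x / y = x / - y" for x y :: real
    by simp
  show ?thesis
    unfolding neg ERi_def ER_def
    using EWi_tendsto[OF i] EW_tendsto
      tendsto_one_plus_div_neg_ln_one_minus[OF EWi_tendsto[OF i]]
      tendsto_one_plus_div_neg_ln_one_minus[OF EW_tendsto]
    unfolding d_mean_def by blast
qed

end
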